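(* Let $\gamma_1,\gamma_2:[a,b]\to\mathrm{Sp}(H)$ be two positive paths. Then the pointwise product $\gamma(t):=\gamma_1(t)\gamma_2(t)$, $t\in[a,b]$, is a positive path.
   Context: $(H,\langle\cdot,\cdot\rangle)$ is a complex Hilbert space and $J\in\mathcal B(H)$ is a bounded injective operator with $J^*=-J$; $\omega(x,y):=\langle Jx,y\rangle$. $\mathrm{Sp}(H):=\{M\in\mathrm{GL}(H): M^*JM=J\}$ (bounded invertible $M$). A $C^1$ path $\gamma$ in $\mathrm{Sp}(H)$ defined on an interval is called positive if $\dot\gamma(t)\gamma(t)^{-1}\in K$ for every $t$, where $K:=\{A\in\mathcal B(H): -JA=A^*J \text{ and } -JA \text{ is positive definite}\}$. *)

theory Defs
  imports "HOL-Analysis.Analysis"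
begin

class complex_inner = real_normed_vector +
  fixes cscale :: "complex \<Rightarrow> 'a \<Rightarrow> 'a"
    and cinner :: "'a \<Rightarrow> 'a \<Rightarrow> complex"
  assumes cscale_add_right: "cscale c (x + y) = cscale c x + cscale c y"
    and cscale_add_left: "cscale (c + d) x = cscale c x + cscale d x"
    and cscale_cscale: "cscale c (cscale d x) = cscale (c * d) x"
    and cscale_one: "cscale 1 x = x"
    and scaleR_cscale: "scaleR r x = cscale (complex_of_real r) x"
    and cinner_add_left: "cinner (x + y) z = cinner x z + cinner y z"
    and cinner_cscale_left: "cinner (cscale c x) y = c * cinner x y"
    and cinner_commute: "cinner y x = cnj (cinner x y)"
    and cinner_nonneg: "0 \<le> Re (cinner x x)"
    and cinner_eq_zero_iff: "cinner x x = 0 \<longleftrightarrow> x = 0"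
    and norm_eq_sqrt_cinner: "norm x = sqrt (Re (cinner x x))"

class chilbert = complex_inner + complete_space

text \<open>\<open>\<B>(H)\<close>: bounded complex-linear operators, represented as bounded (real-)linear
  functions (type \<open>'a \<Rightarrow>\<^sub>L 'a\<close>, carrying the operator norm) that commute with
  complex scalar multiplication.\<close>
definition bop :: "('a::chilbert \<Rightarrow>\<^sub>L 'a) set" where
  "bop = {A. \<forall>c x. blinfun_apply A (cscale c x) = cscale c (blinfun_apply A x)}"

definition is_adjoint :: "('a::chilbert \<Rightarrow>\<^sub>L 'a) \<Rightarrow> ('a \<Rightarrow>\<^sub>L 'a) \<Rightarrow> bool" where
  "is_adjoint B A \<longleftrightarrow> B \<in> bop \<and> (\<forall>x y. cinner (A x) y = cinner x (B y))"

definition GL_op :: "('a::chilbert \<Rightarrow>\<^sub>L 'a) set" where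
  "GL_op = {M \<in> bop. \<exists>N\<in>bop. M o\<^sub>L N = id_blinfun \<and> N o\<^sub>L M = id_blinfun}"

definition inv_op :: "('a::chilbert \<Rightarrow>\<^sub>L 'a) \<Rightarrow> ('a \<Rightarrow>\<^sub>L 'a)" where
  "inv_op M = (THE N. M o\<^sub>L N = id_blinfun \<and> N o\<^sub>L M = id_blinfun)"

definition sympl_op :: "('a::chilbert \<Rightarrow>\<^sub>L 'a) \<Rightarrow> bool" where
  "sympl_op J \<longleftrightarrow> J \<in> bop \<and> inj (blinfun_apply J) \<and> is_adjoint (- J) J"

definition Sp :: "('a::chilbert \<Rightarrow>\<^sub>L 'a) \<Rightarrow> ('a \<Rightarrow>\<^sub>L 'a) set" where
  "Sp J = {M \<in> GL_op. \<exists>Ms. is_adjoint Ms M \<and> Ms o\<^sub>L J o\<^sub>L M = J}"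

definition pos_def :: "('a::chilbert \<Rightarrow>\<^sub>L 'a) \<Rightarrow> bool" where
  "pos_def P \<longleftrightarrow> (\<forall>x. x \<noteq> 0 \<longrightarrow> Im (cinner (P x) x) = 0 \<and> Re (cinner (P x) x) > 0)"

definition Kcone :: "('a::chilbert \<Rightarrow>\<^sub>L 'a) \<Rightarrow> ('a \<Rightarrow>\<^sub>L 'a) set" where
  "Kcone J = {A \<in> bop. (\<exists>As. is_adjoint As A \<and> - (J o\<^sub>L A) = As o\<^sub>L J) \<and> pos_def (- (J o\<^sub>L A))}"

text \<open>\<open>C\<^sup>1\<close> path on an interval \<open>S\<close> in operator norm (one-sided derivatives at endpoints).\<close>
definition C1_on :: "real set \<Rightarrow> (real \<Rightarrow> ('a::chilbert \<Rightarrow>\<^sub>L 'a)) \<Rightarrow> bool" where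
  "C1_on S g \<longleftrightarrow> (\<forall>t\<in>S. g differentiable (at t within S))
      \<and> continuous_on S (\<lambda>t. vector_derivative g (at t within S))"

definition positive_path ::
  "('a::chilbert \<Rightarrow>\<^sub>L 'a) \<Rightarrow> real \<Rightarrow> real \<Rightarrow> (real \<Rightarrow> ('a \<Rightarrow>\<^sub>L 'a)) \<Rightarrow> bool" where
  "positive_path J a b g \<longleftrightarrow>
     (\<forall>t\<in>{a..b}. g t \<in> Sp J) \<and> C1_on {a..b} g \<and>
     (\<forall>t\<in>{a..b}. vector_derivative g (at t within {a..b}) o\<^sub>L inv_op (g t) \<in> Kcone J)"

end

theory Submission
  imports Defs
begin

text \<open>Differentiating the product gives
  \<open>(\<gamma>\<^sub>1\<gamma>\<^sub>2)'(\<gamma>\<^sub>1\<gamma>\<^sub>2)\<inverse> = \<gamma>\<^sub>1'\<gamma>\<^sub>1\<inverse> + \<gamma>\<^sub>1(\<gamma>\<^sub>2'\<gamma>\<^sub>2\<inverse>)\<gamma>\<^sub>1\<inverse>\<close>, so it suffices that \<open>Sp(H)\<close> is closed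
  under products and that the cone \<open>K\<close> is closed under sums and under conjugation
  \<open>A \<mapsto> MAM\<inverse>\<close> by \<open>M \<in> Sp(H)\<close>. For the latter, \<open>M\<^sup>*JM = J\<close> gives
  \<open>-J(MAM\<inverse>) = (M\<inverse>)\<^sup>*(-JA)M\<inverse>\<close>, which is positive definite whenever \<open>-JA\<close> is.
  The one analytic point is that \<open>M\<inverse>\<close> has an adjoint: \<open>M\<^sup>*M\<close> is coercive, hence onto by
  a Lax--Milgram contraction argument, so \<open>M\<^sup>*\<close> is invertible and its inverse is \<open>(M\<inverse>)\<^sup>*\<close>.\<close>

lemma cinner_zero_left [simp]: "cinner 0 (y::'a::complex_inner) = 0"
  using cinner_add_left[of 0 0 y] by simp

lemma cinner_minus_left [simp]: "cinner (- x) (y::'a::complex_inner) = - cinner x y"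
proof -
  have "cinner x y + cinner (- x) y = 0"
    using cinner_add_left[of x "- x" y] by simp
  then show ?thesis
    by (rule add_eq_0_iff[THEN iffD1])
qed

lemma cinner_diff_left: "cinner (x - y) (z::'a::complex_inner) = cinner x z - cinner y z"
  using cinner_add_left[of x "- y" z] by simp

lemma cinner_add_right: "cinner (x::'a::complex_inner) (y + z) = cinner x y + cinner x z"
  by (metis cinner_commute cinner_add_left complex_cnj_add)

lemma cinner_diff_right: "cinner (x::'a::complex_inner) (y - z) = cinner x y - cinner x z"
  by (metis cinner_commute cinner_diff_left complex_cnj_diff)

lemma cinner_scaleR_left: "cinner (r *\<^sub>R x) (y::'a::complex_inner) = of_real r * cinner x y"
  by (simp add: scaleR_cscale cinner_cscale_left)

lemma cinner_scaleR_right: "cinner (x::'a::complex_inner) (r *\<^sub>R y) = of_real r * cinner x y"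
  by (metis cinner_commute cinner_scaleR_left complex_cnj_mult complex_cnj_complex_of_real)

lemma power2_norm_eq_cinner: "(norm (x::'a::complex_inner))\<^sup>2 = Re (cinner x x)"
  by (simp add: norm_eq_sqrt_cinner cinner_nonneg)

lemma power2_norm_diff_scaleR:
  "(norm ((x::'a::complex_inner) - r *\<^sub>R z))\<^sup>2 = (norm x)\<^sup>2 - 2 * r * Re (cinner z x) + r\<^sup>2 * (norm z)\<^sup>2"
proof -
  have "cinner (x - r *\<^sub>R z) (x - r *\<^sub>R z) =
      cinner x x - of_real r * cinner z x - of_real r * cinner x z + of_real r * of_real r * cinner z z"
    by (simp add: cinner_diff_left cinner_diff_right cinner_scaleR_left cinner_scaleR_right algebra_simps)
  moreover have "Re (cinner x z) = Re (cinner z x)"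
    by (subst cinner_commute) simp
  ultimately show ?thesis
    by (simp only: power2_norm_eq_cinner) (simp add: power2_eq_square)
qed

text \<open>The contraction \<open>x \<mapsto> x - t S x\<close> for \<open>t = c / (\<parallel>S\<parallel>\<^sup>2 + c\<^sup>2)\<close> is the classical
  Lax--Milgram device: it turns \<open>S x = y\<close> into a fixed-point problem.\<close>

lemma coercive_contraction:
  fixes S :: "'a::complex_inner \<Rightarrow>\<^sub>L 'a"
  assumes c: "c > 0" and coercive: "\<And>x. c * (norm x)\<^sup>2 \<le> Re (cinner (S x) x)"
  obtains t \<rho> where "t > 0" "0 \<le> \<rho>" "\<rho> < 1" "\<And>x. norm (x - t *\<^sub>R S x) \<le> \<rho> * norm x"
proof -
  define L where "L = norm S"
  define t where "t = c / (L\<^sup>2 + c\<^sup>2)"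
  define q where "q = L\<^sup>2 / (L\<^sup>2 + c\<^sup>2)"
  have D: "L\<^sup>2 + c\<^sup>2 > 0"
    using c by (simp add: add_nonneg_pos)
  have t: "t > 0"
    unfolding t_def using c D by simp
  have q: "0 \<le> q" "q < 1"
    unfolding q_def using c D by (simp_all add: divide_less_eq)
  have tq: "1 - 2 * t * c + t\<^sup>2 * L\<^sup>2 \<le> q"
  proof -
    have "t\<^sup>2 * L\<^sup>2 \<le> t\<^sup>2 * (L\<^sup>2 + c\<^sup>2)"
      by (simp add: mult_left_mono)
    also have "\<dots> = t * c"
      unfolding t_def using D by (simp add: power2_eq_square)
    finally have "1 - 2 * t * c + t\<^sup>2 * L\<^sup>2 \<le> 1 - t * c"
      by (simp add: mult.commute)
    also have "1 - t * c = q"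
      unfolding q_def t_def using c by (simp add: divide_simps power2_eq_square)
    finally show ?thesis .
  qed
  have contr: "norm (x - t *\<^sub>R S x) \<le> sqrt q * norm x" for x
  proof -
    have "(norm (S x))\<^sup>2 \<le> (L * norm x)\<^sup>2"
      unfolding L_def by (simp add: power_mono norm_blinfun)
    then have "(norm (x - t *\<^sub>R S x))\<^sup>2 \<le> (norm x)\<^sup>2 - 2 * t * (c * (norm x)\<^sup>2) + t\<^sup>2 * (L * norm x)\<^sup>2"
      unfolding power2_norm_diff_scaleR
      using mult_left_mono[OF coercive[of x], of "2 * t"] t
      by (smt (verit, best) mult_left_mono zero_le_power2)
    also have "\<dots> = (norm x)\<^sup>2 * (1 - 2 * t * c + t\<^sup>2 * L\<^sup>2)"
      by (simp add: algebra_simps power_mult_distrib)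
    also have "\<dots> \<le> (norm x)\<^sup>2 * q"
      using tq by (simp add: mult_left_mono)
    also have "\<dots> = (sqrt q * norm x)\<^sup>2"
      using q by (simp add: power_mult_distrib)
    finally show ?thesis
      by (rule power2_le_imp_le) (use q in simp)
  qed
  show ?thesis
    by (rule that[of t "sqrt q"]) (use t q contr in auto)
qed

lemma coercive_bounded_below:
  fixes S :: "'a::complex_inner \<Rightarrow>\<^sub>L 'a"
  assumes "c > 0" and "\<And>x. c * (norm x)\<^sup>2 \<le> Re (cinner (S x) x)"
  obtains K where "\<And>x. norm x \<le> K * norm (S x)"
proof -
  obtain t \<rho> where t: "t > 0" "0 \<le> \<rho>" "\<rho> < 1" and contr: "\<And>x. norm (x - t *\<^sub>R S x) \<le> \<rho> * norm x"
    using coercive_contraction assms by blast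
  have "norm x \<le> t / (1 - \<rho>) * norm (S x)" for x
  proof -
    have "norm x \<le> norm (x - t *\<^sub>R S x) + norm (t *\<^sub>R S x)"
      using norm_triangle_ineq[of "x - t *\<^sub>R S x" "t *\<^sub>R S x"] by simp
    also have "\<dots> \<le> \<rho> * norm x + t * norm (S x)"
      using contr[of x] t by simp
    finally show ?thesis
      using t by (simp add: field_simps)
  qed
  then show ?thesis
    using that by blast
qed

lemma coercive_surj:
  fixes S :: "'a::chilbert \<Rightarrow>\<^sub>L 'a"
  assumes "c > 0" and "\<And>x. c * (norm x)\<^sup>2 \<le> Re (cinner (S x) x)"
  shows "surj (blinfun_apply S)"
proof -
  obtain t \<rho> where t: "t > 0" "0 \<le> \<rho>" "\<rho> < 1" and contr: "\<And>x. norm (x - t *\<^sub>R S x) \<le> \<rho> * norm x"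
    using coercive_contraction assms by blast
  have "y \<in> range S" for y
  proof -
    define F where "F z = z - t *\<^sub>R S z + t *\<^sub>R y" for z
    have "dist (F z1) (F z2) \<le> \<rho> * dist z1 z2" for z1 z2
    proof -
      have "F z1 - F z2 = (z1 - z2) - t *\<^sub>R S (z1 - z2)"
        unfolding F_def by (simp add: blinfun.diff_right algebra_simps)
      then show ?thesis
        using contr[of "z1 - z2"] by (simp add: dist_norm)
    qed
    then obtain x where "F x = x"
      using banach_fix_type[of \<rho> F] t by blast
    then have "S x = y"
      using t unfolding F_def by (simp add: algebra_simps)
    then show ?thesis
      by blast
  qed
  then show ?thesis
    by blast
qed

lemma bounded_linear_inv_bounded_below:
  fixes f :: "'a::real_normed_vector \<Rightarrow> 'b::real_normed_vector"
  assumes f: "linear f" and "surj f" and below: "\<And>x. norm x \<le> K * norm (f x)"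
  shows "bounded_linear (inv f)"
proof -
  have "inj f"
  proof (rule injI)
    fix x y assume "f x = f y"
    then show "x = y"
      using below[of "x - y"] by (simp add: linear_diff[OF f])
  qed
  have f_inv: "f (inv f y) = y" for y
    using \<open>surj f\<close> by (rule surj_f_inv_f)
  show ?thesis
  proof (rule bounded_linear_intro)
    show "inv f (x + y) = inv f x + inv f y" for x y
      by (rule injD[OF \<open>inj f\<close>]) (simp add: f_inv linear_add[OF f])
    show "inv f (r *\<^sub>R x) = r *\<^sub>R inv f x" for r x
      by (rule injD[OF \<open>inj f\<close>]) (simp add: f_inv linear_scale[OF f])
    show "norm (inv f x) \<le> norm x * K" for x
      using below[of "inv f x"] by (simp add: f_inv mult.commute)
  qed
qed

lemma adjoint_compose_coercive:
  fixes M N Ms :: "'a::chilbert \<Rightarrow>\<^sub>L 'a"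
  assumes NM: "\<And>x. N (M x) = x" and adj: "is_adjoint Ms M"
  shows "1 / ((norm N)\<^sup>2 + 1) * (norm x)\<^sup>2 \<le> Re (cinner ((Ms o\<^sub>L M) x) x)"
proof -
  have "cinner ((Ms o\<^sub>L M) x) x = cnj (cinner x (Ms (M x)))"
    by (simp add: cinner_commute[of x])
  also have "\<dots> = cnj (cinner (M x) (M x))"
    using adj by (simp add: is_adjoint_def)
  finally have Re_eq: "Re (cinner ((Ms o\<^sub>L M) x) x) = (norm (M x))\<^sup>2"
    by (simp add: power2_norm_eq_cinner)
  have "norm x \<le> norm N * norm (M x)"
    using norm_blinfun[of N "M x"] by (simp add: NM)
  then have "(norm x)\<^sup>2 \<le> (norm N)\<^sup>2 * (norm (M x))\<^sup>2"
    by (metis norm_ge_zero power_mono power_mult_distrib)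
  also have "\<dots> \<le> ((norm N)\<^sup>2 + 1) * (norm (M x))\<^sup>2"
    by (simp add: distrib_right)
  moreover have "(norm N)\<^sup>2 + 1 > 0"
    by (simp add: add_nonneg_pos)
  ultimately show ?thesis
    unfolding Re_eq by (simp add: pos_divide_le_eq mult.commute)
qed

lemma adjoint_of_inverse:
  fixes M N Ms :: "'a::chilbert \<Rightarrow>\<^sub>L 'a"
  assumes MN: "\<And>x. M (N x) = x" and NM: "\<And>x. N (M x) = x" and adj: "is_adjoint Ms M"
  obtains Q where "is_adjoint Q N" and "\<And>y. Q (Ms y) = y"
proof -
  have Ms_bop: "Ms \<in> bop" and Ms_adj: "\<And>x y. cinner (M x) y = cinner x (Ms y)"
    using adj by (auto simp: is_adjoint_def)
  define c where "c = 1 / ((norm N)\<^sup>2 + 1)"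
  have c: "c > 0"
    unfolding c_def by (simp add: add_nonneg_pos)
  have coercive: "c * (norm x)\<^sup>2 \<le> Re (cinner ((Ms o\<^sub>L M) x) x)" for x
    unfolding c_def using adjoint_compose_coercive[OF NM adj] .
  obtain K where K: "\<And>x. norm x \<le> K * norm ((Ms o\<^sub>L M) x)"
    using coercive_bounded_below[OF c coercive] by blast
  have "surj (blinfun_apply (Ms o\<^sub>L M))"
    using coercive_surj[OF c coercive] .
  then have Ms_surj: "surj (blinfun_apply Ms)"
    unfolding surj_def by (metis blinfun_apply_blinfun_compose surjD)
  have Ms_below: "norm z \<le> norm M * K * norm (Ms z)" for z
  proof -
    have "norm z \<le> norm M * norm (N z)"
      using norm_blinfun[of M "N z"] by (simp add: MN)
    also have "\<dots> \<le> norm M * (K * norm (Ms z))"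
      using K[of "N z"] by (simp add: MN mult_left_mono)
    finally show ?thesis
      by (simp add: mult.assoc)
  qed
  have Ms_inj: "inj (blinfun_apply Ms)"
  proof (rule injI)
    fix x y assume "Ms x = Ms y"
    then show "x = y"
      using Ms_below[of "x - y"] by (simp add: blinfun.diff_right)
  qed
  define Q where "Q = Blinfun (inv Ms)"
  have Q_apply: "blinfun_apply Q = inv Ms"
    unfolding Q_def
    by (intro bounded_linear_Blinfun_apply bounded_linear_inv_bounded_below[OF _ Ms_surj Ms_below]
        bounded_linear.linear[OF blinfun.bounded_linear_right])
  have Ms_Q: "Ms (Q y) = y" for y
    using Ms_surj by (simp add: Q_apply surj_f_inv_f)
  have Q_Ms: "Q (Ms y) = y" for y
    using Ms_inj by (simp add: Q_apply)
  have "Q \<in> bop"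
    unfolding bop_def
  proof (intro CollectI allI)
    fix z x
    have "Ms (cscale z (Q x)) = cscale z x"
      using Ms_bop by (simp add: bop_def Ms_Q)
    then show "Q (cscale z x) = cscale z (Q x)"
      by (metis Q_Ms)
  qed
  moreover have "cinner (N x) y = cinner x (Q y)" for x y
    by (metis MN Ms_Q Ms_adj)
  ultimately have "is_adjoint Q N"
    by (simp add: is_adjoint_def)
  then show ?thesis
    using that Q_Ms by blast
qed

lemma bop_compose: "A \<in> bop \<Longrightarrow> B \<in> bop \<Longrightarrow> A o\<^sub>L B \<in> bop"
  by (simp add: bop_def)

lemma bop_add: "A \<in> bop \<Longrightarrow> B \<in> bop \<Longrightarrow> A + B \<in> bop"
  by (simp add: bop_def blinfun.add_left cscale_add_right)

lemma blinfun_compose_eq_id_iff: "A o\<^sub>L B = id_blinfun \<longleftrightarrow> (\<forall>x. A (B x) = x)"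
  by (metis blinfun_apply_blinfun_compose blinfun_apply_id_blinfun blinfun_eqI id_apply)

lemma inv_op_eqI:
  fixes M N :: "'a::chilbert \<Rightarrow>\<^sub>L 'a"
  assumes MN: "\<And>x. M (N x) = x" and NM: "\<And>x. N (M x) = x"
  shows "inv_op M = N"
  unfolding inv_op_def
proof (rule the_equality)
  show "M o\<^sub>L N = id_blinfun \<and> N o\<^sub>L M = id_blinfun"
    using assms by (simp add: blinfun_compose_eq_id_iff)
next
  fix N' assume "M o\<^sub>L N' = id_blinfun \<and> N' o\<^sub>L M = id_blinfun"
  then have "N' x = N x" for x
    by (metis MN blinfun_compose_eq_id_iff)
  then show "N' = N"
    by (rule blinfun_eqI)
qed

lemma GL_op_inv_op:
  fixes M :: "'a::chilbert \<Rightarrow>\<^sub>L 'a"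
  assumes "M \<in> GL_op"
  shows "M \<in> bop" "inv_op M \<in> bop" "M (inv_op M x) = x" "inv_op M (M x) = x"
proof -
  obtain N where "M \<in> bop" "N \<in> bop" and MN: "\<And>x. M (N x) = x" and NM: "\<And>x. N (M x) = x"
    using assms by (auto simp: GL_op_def blinfun_compose_eq_id_iff)
  moreover have "inv_op M = N"
    using MN NM by (rule inv_op_eqI)
  ultimately show "M \<in> bop" "inv_op M \<in> bop" "M (inv_op M x) = x" "inv_op M (M x) = x"
    by simp_all
qed

lemma GL_opI:
  fixes M N :: "'a::chilbert \<Rightarrow>\<^sub>L 'a"
  assumes "M \<in> bop" "N \<in> bop" "\<And>x. M (N x) = x" "\<And>x. N (M x) = x"
  shows "M \<in> GL_op"
  using assms unfolding GL_op_def by (auto simp: blinfun_compose_eq_id_iff)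

lemma GL_op_compose:
  fixes M1 M2 :: "'a::chilbert \<Rightarrow>\<^sub>L 'a"
  assumes "M1 \<in> GL_op" and "M2 \<in> GL_op"
  shows "M1 o\<^sub>L M2 \<in> GL_op"
  by (rule GL_opI[where N = "inv_op M2 o\<^sub>L inv_op M1"])
    (simp_all add: bop_compose GL_op_inv_op assms)

lemma inv_op_compose:
  fixes M1 M2 :: "'a::chilbert \<Rightarrow>\<^sub>L 'a"
  assumes "M1 \<in> GL_op" and "M2 \<in> GL_op"
  shows "inv_op (M1 o\<^sub>L M2) = inv_op M2 o\<^sub>L inv_op M1"
  by (rule inv_op_eqI) (simp_all add: GL_op_inv_op assms)

lemma SpE:
  fixes M J :: "'a::chilbert \<Rightarrow>\<^sub>L 'a"
  assumes "M \<in> Sp J"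
  obtains Ms where "M \<in> GL_op" "is_adjoint Ms M" "\<And>x. Ms (J (M x)) = J x"
proof -
  obtain Ms where "M \<in> GL_op" "is_adjoint Ms M" and "Ms o\<^sub>L J o\<^sub>L M = J"
    using assms by (auto simp: Sp_def)
  moreover from this(3) have "Ms (J (M x)) = J x" for x
    by (metis blinfun_apply_blinfun_compose)
  ultimately show ?thesis
    using that by blast
qed

lemma Sp_compose:
  fixes M1 M2 J :: "'a::chilbert \<Rightarrow>\<^sub>L 'a"
  assumes "M1 \<in> Sp J" and "M2 \<in> Sp J"
  shows "M1 o\<^sub>L M2 \<in> Sp J"
proof -
  obtain Ms1 where 1: "M1 \<in> GL_op" "is_adjoint Ms1 M1" "\<And>x. Ms1 (J (M1 x)) = J x"
    using SpE[OF assms(1)] by blast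
  obtain Ms2 where 2: "M2 \<in> GL_op" "is_adjoint Ms2 M2" "\<And>x. Ms2 (J (M2 x)) = J x"
    using SpE[OF assms(2)] by blast
  have "M1 o\<^sub>L M2 \<in> GL_op"
    using 1(1) 2(1) by (rule GL_op_compose)
  moreover have "is_adjoint (Ms2 o\<^sub>L Ms1) (M1 o\<^sub>L M2)"
    using 1(2) 2(2) by (auto simp: is_adjoint_def bop_compose)
  moreover have "Ms2 o\<^sub>L Ms1 o\<^sub>L J o\<^sub>L (M1 o\<^sub>L M2) = J"
    by (rule blinfun_eqI) (simp add: 1(3) 2(3))
  ultimately show ?thesis
    unfolding Sp_def by blast
qed

lemma KconeI:
  fixes A As J :: "'a::chilbert \<Rightarrow>\<^sub>L 'a"
  assumes "A \<in> bop" "is_adjoint As A" "\<And>x. As (J x) = - J (A x)" "pos_def (- (J o\<^sub>L A))"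
  shows "A \<in> Kcone J"
proof -
  have "- (J o\<^sub>L A) = As o\<^sub>L J"
    by (rule blinfun_eqI) (simp add: assms(3) blinfun.minus_left)
  then show ?thesis
    unfolding Kcone_def using assms by blast
qed

lemma KconeE:
  fixes A J :: "'a::chilbert \<Rightarrow>\<^sub>L 'a"
  assumes "A \<in> Kcone J"
  obtains As where "A \<in> bop" "is_adjoint As A" "\<And>x. As (J x) = - J (A x)" "pos_def (- (J o\<^sub>L A))"
proof -
  obtain As where "A \<in> bop" "is_adjoint As A" "- (J o\<^sub>L A) = As o\<^sub>L J" "pos_def (- (J o\<^sub>L A))"
    using assms by (auto simp: Kcone_def)
  moreover from this(3) have "As (J x) = - J (A x)" for x
    by (metis blinfun.minus_left blinfun_apply_blinfun_compose)
  ultimately show ?thesis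
    using that by blast
qed

lemma Kcone_add:
  fixes A1 A2 J :: "'a::chilbert \<Rightarrow>\<^sub>L 'a"
  assumes "A1 \<in> Kcone J" and "A2 \<in> Kcone J"
  shows "A1 + A2 \<in> Kcone J"
proof -
  obtain As1 where 1: "A1 \<in> bop" "is_adjoint As1 A1" "\<And>x. As1 (J x) = - J (A1 x)" "pos_def (- (J o\<^sub>L A1))"
    using KconeE[OF assms(1)] by blast
  obtain As2 where 2: "A2 \<in> bop" "is_adjoint As2 A2" "\<And>x. As2 (J x) = - J (A2 x)" "pos_def (- (J o\<^sub>L A2))"
    using KconeE[OF assms(2)] by blast
  show ?thesis
  proof (rule KconeI)
    show "A1 + A2 \<in> bop"
      using 1(1) 2(1) by (rule bop_add)
    show "is_adjoint (As1 + As2) (A1 + A2)"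
      using 1(2) 2(2) by (simp add: is_adjoint_def bop_add blinfun.add_left cinner_add_left cinner_add_right)
    show "(As1 + As2) (J x) = - J ((A1 + A2) x)" for x
      by (simp add: 1(3) 2(3) blinfun.add_left blinfun.add_right)
    show "pos_def (- (J o\<^sub>L (A1 + A2)))"
      using 1(4) 2(4)
      by (fastforce simp: pos_def_def blinfun.add_left blinfun.add_right blinfun.minus_left
          cinner_add_left cinner_diff_left)
  qed
qed

lemma Kcone_conj:
  fixes M A J :: "'a::chilbert \<Rightarrow>\<^sub>L 'a"
  assumes M: "M \<in> Sp J" and A: "A \<in> Kcone J"
  shows "M o\<^sub>L A o\<^sub>L inv_op M \<in> Kcone J"
proof -
  obtain Ms where GL: "M \<in> GL_op" and adj: "is_adjoint Ms M" and Ms_J: "\<And>x. Ms (J (M x)) = J x"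
    using SpE[OF M] by blast
  note MN = GL_op_inv_op(3)[OF GL] and NM = GL_op_inv_op(4)[OF GL]
  obtain Q where Q: "is_adjoint Q (inv_op M)" and Q_Ms: "\<And>y. Q (Ms y) = y"
    using adjoint_of_inverse[OF MN NM adj] by blast
  obtain As where A': "A \<in> bop" "is_adjoint As A" "\<And>x. As (J x) = - J (A x)" "pos_def (- (J o\<^sub>L A))"
    using KconeE[OF A] by blast
  have Q_J: "Q (J z) = J (M z)" for z
    by (metis Ms_J Q_Ms)
  have Ms_J': "Ms (J y) = J (inv_op M y)" for y
    by (metis MN Ms_J)
  show ?thesis
  proof (rule KconeI)
    show "M o\<^sub>L A o\<^sub>L inv_op M \<in> bop"
      by (intro bop_compose GL_op_inv_op(1,2)[OF GL] A'(1))
    show "is_adjoint (Q o\<^sub>L As o\<^sub>L Ms) (M o\<^sub>L A o\<^sub>L inv_op M)"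
      using Q adj A'(2) by (auto simp: is_adjoint_def bop_compose)
    show "(Q o\<^sub>L As o\<^sub>L Ms) (J x) = - J ((M o\<^sub>L A o\<^sub>L inv_op M) x)" for x
      by (simp add: Ms_J' A'(3) blinfun.minus_right Q_J)
    show "pos_def (- (J o\<^sub>L (M o\<^sub>L A o\<^sub>L inv_op M)))"
      unfolding pos_def_def
    proof (intro allI impI)
      fix x :: 'a assume "x \<noteq> 0"
      then have Nx: "inv_op M x \<noteq> 0"
        by (metis MN blinfun.zero_right)
      have "cinner ((- (J o\<^sub>L (M o\<^sub>L A o\<^sub>L inv_op M))) x) x
          = cinner (Q ((- (J o\<^sub>L A)) (inv_op M x))) x"
        by (simp add: blinfun.minus_left blinfun.minus_right Q_J)
      also have "\<dots> = cinner ((- (J o\<^sub>L A)) (inv_op M x)) (inv_op M x)"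
        using Q unfolding is_adjoint_def by (metis cinner_commute)
      finally show "Im (cinner ((- (J o\<^sub>L (M o\<^sub>L A o\<^sub>L inv_op M))) x) x) = 0
          \<and> 0 < Re (cinner ((- (J o\<^sub>L (M o\<^sub>L A o\<^sub>L inv_op M))) x) x)"
        using A'(4) Nx by (simp add: pos_def_def)
    qed
  qed
qed

lemma vector_derivative_blinfun_compose:
  fixes f :: "real \<Rightarrow> 'b::real_normed_vector \<Rightarrow>\<^sub>L 'c::real_normed_vector"
    and g :: "real \<Rightarrow> 'a::real_normed_vector \<Rightarrow>\<^sub>L 'b"
  assumes "a < b" "t \<in> {a..b}"
    and "f differentiable at t within {a..b}" "g differentiable at t within {a..b}"
  shows "vector_derivative (\<lambda>s. f s o\<^sub>L g s) (at t within {a..b})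
    = (f t o\<^sub>L vector_derivative g (at t within {a..b}))
      + (vector_derivative f (at t within {a..b}) o\<^sub>L g t)"
proof -
  have "((\<lambda>s. f s o\<^sub>L g s) has_vector_derivative
      (f t o\<^sub>L vector_derivative g (at t within {a..b}))
      + (vector_derivative f (at t within {a..b}) o\<^sub>L g t)) (at t within {a..b})"
    using assms(3,4)
    by (intro bounded_bilinear.has_vector_derivative[OF bounded_bilinear_blinfun_compose])
      (simp_all add: vector_derivative_works)
  then show ?thesis
    using vector_derivative_within_cbox[of a b t] assms(1,2) by simp
qed

lemma C1_on_blinfun_compose:
  fixes f g :: "real \<Rightarrow> 'a::chilbert \<Rightarrow>\<^sub>L 'a"
  assumes "a < b" and f: "C1_on {a..b} f" and g: "C1_on {a..b} g"
  shows "C1_on {a..b} (\<lambda>t. f t o\<^sub>L g t)"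
proof -
  have df: "\<And>t. t \<in> {a..b} \<Longrightarrow> f differentiable at t within {a..b}"
    and dg: "\<And>t. t \<in> {a..b} \<Longrightarrow> g differentiable at t within {a..b}"
    using f g by (simp_all add: C1_on_def)
  have "continuous_on {a..b} f" "continuous_on {a..b} g"
    using df dg by (auto simp: continuous_on_eq_continuous_within
        intro: differentiable_imp_continuous_within)
  moreover have "continuous_on {a..b} (\<lambda>t. vector_derivative f (at t within {a..b}))"
    and "continuous_on {a..b} (\<lambda>t. vector_derivative g (at t within {a..b}))"
    using f g by (simp_all add: C1_on_def)
  ultimately have "continuous_on {a..b} (\<lambda>t. (f t o\<^sub>L vector_derivative g (at t within {a..b}))
      + (vector_derivative f (at t within {a..b}) o\<^sub>L g t))"
    by (intro continuous_on_add bounded_bilinear.continuous_on[OF bounded_bilinear_blinfun_compose])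
  then have "continuous_on {a..b} (\<lambda>t. vector_derivative (\<lambda>s. f s o\<^sub>L g s) (at t within {a..b}))"
    by (rule continuous_on_eq) (simp add: vector_derivative_blinfun_compose assms(1) df dg)
  moreover have "(\<lambda>t. f t o\<^sub>L g t) differentiable at t within {a..b}" if "t \<in> {a..b}" for t
    using bounded_bilinear.has_vector_derivative[OF bounded_bilinear_blinfun_compose
        df[OF that, THEN vector_derivative_works[THEN iffD1]]
        dg[OF that, THEN vector_derivative_works[THEN iffD1]]]
    by (rule differentiableI_vector)
  ultimately show ?thesis
    by (simp add: C1_on_def)
qed

theorem lemma2p2:
  fixes J :: "'a::chilbert \<Rightarrow>\<^sub>L 'a"
    and \<gamma>1 \<gamma>2 :: "real \<Rightarrow> ('a \<Rightarrow>\<^sub>L 'a)"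
    and a b :: real
  assumes "sympl_op J"
    and "a < b"
    and "positive_path J a b \<gamma>1"
    and "positive_path J a b \<gamma>2"
  shows "positive_path J a b (\<lambda>t. \<gamma>1 t o\<^sub>L \<gamma>2 t)"
proof -
  let ?D = "\<lambda>\<gamma> t. vector_derivative \<gamma> (at t within {a..b})"
  have Sp: "\<And>t. t \<in> {a..b} \<Longrightarrow> \<gamma>1 t \<in> Sp J \<and> \<gamma>2 t \<in> Sp J"
    and C1: "C1_on {a..b} \<gamma>1" "C1_on {a..b} \<gamma>2"
    and K: "\<And>t. t \<in> {a..b} \<Longrightarrow>
      ?D \<gamma>1 t o\<^sub>L inv_op (\<gamma>1 t) \<in> Kcone J \<and> ?D \<gamma>2 t o\<^sub>L inv_op (\<gamma>2 t) \<in> Kcone J"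
    using assms(3,4) by (simp_all add: positive_path_def)
  have "?D (\<lambda>t. \<gamma>1 t o\<^sub>L \<gamma>2 t) t o\<^sub>L inv_op (\<gamma>1 t o\<^sub>L \<gamma>2 t)
      = (?D \<gamma>1 t o\<^sub>L inv_op (\<gamma>1 t))
        + (\<gamma>1 t o\<^sub>L (?D \<gamma>2 t o\<^sub>L inv_op (\<gamma>2 t)) o\<^sub>L inv_op (\<gamma>1 t))"
    if t: "t \<in> {a..b}" for t
  proof -
    have GL: "\<gamma>1 t \<in> GL_op" "\<gamma>2 t \<in> GL_op"
      using Sp[OF t] by (simp_all add: Sp_def)
    show ?thesis
      using C1 t \<open>a < b\<close>
      by (intro blinfun_eqI)
        (simp add: vector_derivative_blinfun_compose C1_on_def inv_op_compose GL GL_op_inv_op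
          blinfun.add_left)
  qed
  then have "?D (\<lambda>t. \<gamma>1 t o\<^sub>L \<gamma>2 t) t o\<^sub>L inv_op (\<gamma>1 t o\<^sub>L \<gamma>2 t) \<in> Kcone J"
    if "t \<in> {a..b}" for t
    using Sp[OF that] K[OF that] that by (simp add: Kcone_add Kcone_conj)
  then show ?thesis
    using Sp C1 assms(2) by (simp add: positive_path_def Sp_compose C1_on_blinfun_compose)
qed

end
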